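(* Let $x^*\in X$ satisfy $\langle F(x^* ),x-x^*\rangle\ge0$ for all $x\in X$ and, for some $\mu>0$, $\langle F(x),x-x^*\rangle\ge2\mu V(x,x^* )$ for all $x\in X$. Run the SBOE method with $p_i=\frac1b$ for all $i$ and, for all $t$, $$\gamma_t=\gamma=\frac1{2\bar Lb},\qquad\lambda_t=\frac{b+2(b-1)\mu\gamma}{1+2\mu\gamma},\qquad\theta_t=\Big(\frac{1+2\mu\gamma}{1+2\mu\gamma(b-1)/b}\Big)^t.$$ Then $$\mathbb{E}[V(x_{k+1},x^* )]\le2\Big(\frac{1+2\mu\frac{b-1}{b}\gamma}{1+2\mu\gamma}\Big)^k\Big[V(x_1,x^* )+\frac{b-1}{b}\gamma\langle F(x_1),x_1-x^*\rangle\Big],$$ where the expectation is over $i_1,\dots,i_k$.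
   Context: Let $X=X_1\times\cdots\times X_b\subseteq\mathbb{R}^n$, where each $X_i\subseteq\mathbb{R}^{n_i}$ is nonempty closed convex and $n_1+\dots+n_b=n$; write $x=(x^{(1)},\dots,x^{(b)})$. Each $\mathbb{R}^{n_i}$ carries a norm $\|\cdot\|_i$ with dual norm $\|\cdot\|_{i,*}$; on $\mathbb{R}^n$ set $\|x\|^2=\sum_i\|x^{(i)}\|_i^2$ and $\|y\|_*^2=\sum_i\|y^{(i)}\|_{i,*}^2$. For $F:X\to\mathbb{R}^n$ let $F_i(x)$ be its $i$-th block; assume $\|F_i(x_1)-F_i(x_2)\|_{i,*}\le\bar L\|x_1-x_2\|$ for all $i$ and $x_1,x_2\in X$. For each $i$ let $\omega_i$ be strongly convex with modulus $1$ w.r.t. $\|\cdot\|_i$ on $X_i$, $V_i(u,v)=\omega_i(v)-\omega_i(u)-\langle\omega_i'(u),v-u\rangle$, and $V(x,y)=\sum_iV_i(x^{(i)},y^{(i)})$. SBOE method: given $x_0=x_1\in X$, nonnegative $\{\gamma_t\},\{\lambda_t\}$ and probabilities $p_1,\dots,p_b$; for $t=1,\dots,k$ draw $i_t$ with $\mathbb{P}(i_t=i)=p_i$ independently of the past, set $x_{t+1}^{(i_t)}=\operatorname{argmin}_{u\in X_{i_t}}\gamma_t\langle F_{i_t}(x_t)+\lambda_t(F_{i_t}(x_t)-F_{i_t}(x_{t-1})),u\rangle+V_{i_t}(x_t^{(i_t)},u)$ and $x_{t+1}^{(i)}=x_t^{(i)}$ for $i\ne i_t$. *)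

theory Defs
  imports "HOL-Analysis.Analysis" "HOL-Probability.Probability"
begin

text \<open>The block structure is given by
  blk :: 'n => nat assigning each coordinate to a block in {0..<b}
  (blocks are 0-indexed). Block i of a vector is its orthogonal projection onto
  the coordinates of block i; R^{n_i} is identified with blk_space blk i.\<close>

definition blk_proj :: "('n \<Rightarrow> nat) \<Rightarrow> nat \<Rightarrow> real^'n \<Rightarrow> real^'n" where
  "blk_proj blk i x = (\<chi> j. if blk j = i then x $ j else 0)"

definition blk_space :: "('n \<Rightarrow> nat) \<Rightarrow> nat \<Rightarrow> (real^'n) set" where
  "blk_space blk i = {x. \<forall>j. blk j \<noteq> i \<longrightarrow> x $ j = 0}"

definition prod_set :: "('n \<Rightarrow> nat) \<Rightarrow> nat \<Rightarrow> (nat \<Rightarrow> (real^'n) set) \<Rightarrow> (real^'n) set" where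
  "prod_set blk b Xs = {x. \<forall>i<b. blk_proj blk i x \<in> Xs i}"

definition is_norm_on :: "'a::real_vector set \<Rightarrow> ('a \<Rightarrow> real) \<Rightarrow> bool" where
  "is_norm_on S N \<longleftrightarrow>
     (\<forall>x\<in>S. N x \<ge> 0 \<and> (N x = 0 \<longleftrightarrow> x = 0)) \<and>
     (\<forall>x\<in>S. \<forall>c. N (c *\<^sub>R x) = \<bar>c\<bar> * N x) \<and>
     (\<forall>x\<in>S. \<forall>y\<in>S. N (x + y) \<le> N x + N y)"

definition dual_norm :: "'a::real_inner set \<Rightarrow> ('a \<Rightarrow> real) \<Rightarrow> 'a \<Rightarrow> real" where
  "dual_norm S N y = Sup {inner y u | u. u \<in> S \<and> N u \<le> 1}"

definition blk_norm :: "nat \<Rightarrow> ('n \<Rightarrow> nat) \<Rightarrow> (nat \<Rightarrow> real^'n \<Rightarrow> real) \<Rightarrow> real^'n \<Rightarrow> real" where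
  "blk_norm b blk N x = sqrt (\<Sum>i<b. (N i (blk_proj blk i x))\<^sup>2)"

definition strongly_convex1 :: "'a::real_inner set \<Rightarrow> ('a \<Rightarrow> real) \<Rightarrow> ('a \<Rightarrow> real) \<Rightarrow> ('a \<Rightarrow> 'a) \<Rightarrow> bool" where
  "strongly_convex1 S N \<omega> \<omega>' \<longleftrightarrow>
     (\<forall>u\<in>S. \<forall>v\<in>S. \<omega> v \<ge> \<omega> u + inner (\<omega>' u) (v - u) + 1/2 * (N (v - u))\<^sup>2)"

definition bregman :: "('a::real_inner \<Rightarrow> real) \<Rightarrow> ('a \<Rightarrow> 'a) \<Rightarrow> 'a \<Rightarrow> 'a \<Rightarrow> real" where
  "bregman \<omega> \<omega>' u v = \<omega> v - \<omega> u - inner (\<omega>' u) (v - u)"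

definition blk_V :: "nat \<Rightarrow> ('n \<Rightarrow> nat) \<Rightarrow> (nat \<Rightarrow> real^'n \<Rightarrow> real) \<Rightarrow> (nat \<Rightarrow> real^'n \<Rightarrow> real^'n)
    \<Rightarrow> real^'n \<Rightarrow> real^'n \<Rightarrow> real" where
  "blk_V b blk \<omega> \<omega>' x y = (\<Sum>i<b. bregman (\<omega> i) (\<omega>' i) (blk_proj blk i x) (blk_proj blk i y))"

definition prox :: "'a::real_inner set \<Rightarrow> ('a \<Rightarrow> real) \<Rightarrow> ('a \<Rightarrow> 'a) \<Rightarrow> real \<Rightarrow> 'a \<Rightarrow> 'a \<Rightarrow> 'a" where
  "prox Xi \<omega> \<omega>' gam g xi = (SOME u. u \<in> Xi \<and>
      (\<forall>v\<in>Xi. gam * inner g u + bregman \<omega> \<omega>' xi u \<le> gam * inner g v + bregman \<omega> \<omega>' xi v))"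

text \<open>SBOE states: sboe_st ... seq t = (x_t, x_{t+1}), where seq t = i_t (t >= 1).\<close>
primrec sboe_st :: "('n \<Rightarrow> nat) \<Rightarrow> (nat \<Rightarrow> (real^'n) set) \<Rightarrow> (nat \<Rightarrow> real^'n \<Rightarrow> real)
    \<Rightarrow> (nat \<Rightarrow> real^'n \<Rightarrow> real^'n) \<Rightarrow> (real^'n \<Rightarrow> real^'n) \<Rightarrow> (nat \<Rightarrow> real) \<Rightarrow> (nat \<Rightarrow> real)
    \<Rightarrow> real^'n \<Rightarrow> (nat \<Rightarrow> nat) \<Rightarrow> nat \<Rightarrow> (real^'n) \<times> (real^'n)" where
  "sboe_st blk Xs \<omega> \<omega>' F gam lam x1 seq 0 = (x1, x1)"
| "sboe_st blk Xs \<omega> \<omega>' F gam lam x1 seq (Suc t) =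
     (let (xp, xc) = sboe_st blk Xs \<omega> \<omega>' F gam lam x1 seq t;
          i = seq (Suc t);
          g = blk_proj blk i (F xc + lam (Suc t) *\<^sub>R (F xc - F xp));
          u = prox (Xs i) (\<omega> i) (\<omega>' i) (gam (Suc t)) g (blk_proj blk i xc)
      in (xc, xc - blk_proj blk i xc + u))"

text \<open>x_{k+1} of SBOE run with index sequence seq.\<close>
definition sboe_next where
  "sboe_next blk Xs \<omega> \<omega>' F gam lam x1 seq k = snd (sboe_st blk Xs \<omega> \<omega>' F gam lam x1 seq k)"

end

(* A Lyapunov argument. With q = (b-1)/b and rho = (1 + 2 mu gamma) / (1 + 2 mu gamma q),
   the potential
     lyap (x_{t-1}, x_t) = V(x_t, xstar) + gamma q <F x_t, x_t - xstar>
                         - (gamma <F x_t - F x_{t-1}, x_t - xstar> - ||x_t - x_{t-1}||^2 / 4) / rho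
   contracts by the factor 1/rho in expectation over the uniformly chosen block of one step.
   For a fixed block, the three-point inequality of the prox step bounds the new potential, and
   gamma = 1/(2 L b) lets the squared step lengths absorb the extrapolation term; averaging over
   the b blocks reassembles the full operator F, and the growth condition pays for the factor
   rho. Finally lyap >= V/2, and lyap (x_1, x_1) is the bracket of the claimed bound. *)

theory Submission
  imports Defs
begin

context
  fixes S :: "'a::euclidean_space set" and N :: "'a \<Rightarrow> real"
  assumes S: "subspace S" and N: "is_norm_on S N"
begin

lemma is_norm_on_nonneg: "x \<in> S \<Longrightarrow> 0 \<le> N x"
  using N by (simp add: is_norm_on_def)

lemma is_norm_on_eq_0_iff: "x \<in> S \<Longrightarrow> N x = 0 \<longleftrightarrow> x = 0"
  using N by (simp add: is_norm_on_def)

lemma is_norm_on_zero: "N 0 = 0"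
  using is_norm_on_eq_0_iff[OF subspace_0[OF S]] by simp

lemma is_norm_on_scaleR: "x \<in> S \<Longrightarrow> N (c *\<^sub>R x) = \<bar>c\<bar> * N x"
  using N by (simp add: is_norm_on_def)

lemma is_norm_on_triangle: "x \<in> S \<Longrightarrow> y \<in> S \<Longrightarrow> N (x + y) \<le> N x + N y"
  using N by (simp add: is_norm_on_def)

lemma is_norm_on_minus: "x \<in> S \<Longrightarrow> N (- x) = N x"
  using is_norm_on_scaleR[of x "-1"] by simp

lemma is_norm_on_minus_commute: "x \<in> S \<Longrightarrow> y \<in> S \<Longrightarrow> N (x - y) = N (y - x)"
  using is_norm_on_minus[of "y - x"] by (simp add: subspace_diff[OF S])

lemma is_norm_on_sum:
  assumes "finite A" "\<And>a. a \<in> A \<Longrightarrow> f a \<in> S"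
  shows "N (\<Sum>a\<in>A. f a) \<le> (\<Sum>a\<in>A. N (f a))"
  using assms
proof (induction A rule: finite_induct)
  case (insert a A)
  have "N (f a + sum f A) \<le> N (f a) + N (sum f A)"
    using insert.prems by (intro is_norm_on_triangle) (auto intro: subspace_sum[OF S])
  with insert show ?case by simp
qed (simp add: is_norm_on_zero)

lemma is_norm_on_le_norm: "\<exists>M\<ge>0. \<forall>x\<in>S. N x \<le> M * norm x"
proof -
  obtain B where B: "B \<subseteq> S" "pairwise orthogonal B" "\<And>v. v \<in> B \<Longrightarrow> norm v = 1"
      "independent B" "span B = S"
    using orthonormal_basis_subspace[OF S] by metis
  have fin: "finite B" using B(4) by (rule finiteI_independent)
  have "N x \<le> (\<Sum>v\<in>B. N v) * norm x" if x: "x \<in> S" for x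
  proof -
    have "N x = N (\<Sum>v\<in>B. (x \<bullet> v) *\<^sub>R v)"
      using orthonormal_basis_expand[OF B(2,3) _ fin] x B(5) by simp
    also have "\<dots> \<le> (\<Sum>v\<in>B. N ((x \<bullet> v) *\<^sub>R v))"
      using B(1) by (intro is_norm_on_sum[OF fin] subspace_scale[OF S]) auto
    also have "\<dots> = (\<Sum>v\<in>B. \<bar>x \<bullet> v\<bar> * N v)"
      using B(1) by (intro sum.cong) (auto simp: is_norm_on_scaleR)
    also have "\<dots> \<le> (\<Sum>v\<in>B. norm x * N v)"
    proof (intro sum_mono mult_right_mono)
      fix v assume "v \<in> B"
      then show "\<bar>x \<bullet> v\<bar> \<le> norm x" "0 \<le> N v"
        using B Cauchy_Schwarz_ineq2[of x v] is_norm_on_nonneg by auto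
    qed
    finally show ?thesis by (simp add: sum_distrib_left mult.commute)
  qed
  moreover have "0 \<le> (\<Sum>v\<in>B. N v)"
    using B(1) is_norm_on_nonneg by (auto intro: sum_nonneg)
  ultimately show ?thesis by blast
qed

lemma continuous_on_is_norm_on: "continuous_on S N"
proof -
  obtain M where "M \<ge> 0" and M: "\<forall>x\<in>S. N x \<le> M * norm x" using is_norm_on_le_norm by blast
  have "dist (N x) (N y) \<le> M * dist x y" if "x \<in> S" "y \<in> S" for x y
  proof -
    have xy: "x - y \<in> S" "y - x \<in> S" using that subspace_diff[OF S] by auto
    have "N x \<le> N (x - y) + N y" "N y \<le> N (y - x) + N x"
      using is_norm_on_triangle[OF xy(1) that(2)] is_norm_on_triangle[OF xy(2) that(1)] by simp_all
    moreover have "N (x - y) \<le> M * dist x y" "N (y - x) \<le> M * dist x y"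
      using M xy by (auto simp: dist_norm norm_minus_commute)
    ultimately show ?thesis by (simp add: dist_real_def abs_le_iff)
  qed
  then have "M-lipschitz_on S N" using \<open>M \<ge> 0\<close> by (intro lipschitz_onI) auto
  then show ?thesis by (rule lipschitz_on_continuous_on)
qed

lemma is_norm_on_ge_norm: "\<exists>c>0. \<forall>x\<in>S. c * norm x \<le> N x"
proof (cases "S \<inter> sphere 0 1 = {}")
  case True
  have "x = 0" if "x \<in> S" for x
    using True that subspace_scale[OF S, of x "1 / norm x"] by (auto simp: dist_norm)
  then have "\<forall>x\<in>S. 1 * norm x \<le> N x" using is_norm_on_zero by force
  then show ?thesis by (intro exI[of _ 1]) auto
next
  case False
  have "compact (S \<inter> sphere 0 1)"
    using closed_subspace[OF S] by (intro closed_Int_compact) auto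
  then obtain e where e: "e \<in> S \<inter> sphere 0 1" and min: "\<forall>y\<in>S \<inter> sphere 0 1. N e \<le> N y"
    using continuous_attains_inf[OF _ False continuous_on_subset[OF continuous_on_is_norm_on]]
    by blast
  have "N e > 0"
    using e is_norm_on_nonneg[of e] is_norm_on_eq_0_iff[of e] by fastforce
  moreover have "N e * norm x \<le> N x" if x: "x \<in> S" "x \<noteq> 0" for x
  proof -
    have "N e \<le> N ((1 / norm x) *\<^sub>R x)"
      using min x subspace_scale[OF S] by auto
    then show ?thesis using x by (simp add: is_norm_on_scaleR field_simps)
  qed
  ultimately show ?thesis by (metis is_norm_on_zero norm_zero mult_zero_right order_refl)
qed

lemma inner_le_dual_norm:
  assumes u: "u \<in> S"
  shows "inner y u \<le> dual_norm S N y * N u"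
proof (cases "u = 0")
  case False
  obtain c where c: "c > 0" "\<forall>x\<in>S. c * norm x \<le> N x" using is_norm_on_ge_norm by blast
  have bdd: "bdd_above {inner y v | v. v \<in> S \<and> N v \<le> 1}"
  proof (rule bdd_aboveI)
    fix a assume "a \<in> {inner y v | v. v \<in> S \<and> N v \<le> 1}"
    then obtain v where v: "a = inner y v" "v \<in> S" "N v \<le> 1" by blast
    then have "norm v \<le> 1 / c" using c by (auto simp: field_simps intro: order_trans)
    then have "norm y * norm v \<le> norm y * (1 / c)" by (rule mult_left_mono) simp
    then show "a \<le> norm y * (1 / c)" using v(1) norm_cauchy_schwarz[of y v] by linarith
  qed
  have pos: "N u > 0" using u False is_norm_on_nonneg is_norm_on_eq_0_iff by fastforce
  have "(1 / N u) *\<^sub>R u \<in> S" "N ((1 / N u) *\<^sub>R u) \<le> 1"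
    using u pos subspace_scale[OF S] by (auto simp: is_norm_on_scaleR)
  then have "inner y ((1 / N u) *\<^sub>R u) \<le> dual_norm S N y"
    unfolding dual_norm_def by (intro cSup_upper[OF _ bdd]) blast
  then show ?thesis using pos by (simp add: field_simps)
qed (simp add: is_norm_on_zero)

end

lemma min_on_convex_imp_derivative_nonneg:
  fixes f :: "'a::real_normed_vector \<Rightarrow> real"
  assumes "convex S" "u \<in> S" "v \<in> S" and f': "(f has_derivative f') (at u within S)"
    and min: "\<forall>w\<in>S. f u \<le> f w"
  shows "0 \<le> f' (v - u)"
proof (rule ccontr)
  assume neg: "\<not> 0 \<le> f' (v - u)"
  define p where "p t = u + t *\<^sub>R (v - u)" for t :: real
  have p_in: "p t \<in> S" if "t \<in> {0..1}" for t
    using that convexD_alt[OF assms(1-3), of t] by (simp add: p_def algebra_simps)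
  have "(p has_derivative (\<lambda>t. t *\<^sub>R (v - u))) (at 0 within {0..1})"
    unfolding p_def by (auto intro!: derivative_eq_intros)
  moreover have "(f has_derivative f') (at (p 0) within p ` {0..1})"
    using has_derivative_subset[OF f'] p_in by (simp add: p_def image_subset_iff)
  ultimately have "((f \<circ> p) has_derivative f' \<circ> (\<lambda>t. t *\<^sub>R (v - u))) (at 0 within {0..1})"
    by (rule diff_chain_within)
  moreover have "f' \<circ> (\<lambda>t. t *\<^sub>R (v - u)) = (*) (f' (v - u))"
    using linear_scale[OF has_derivative_linear[OF f']] by (simp add: fun_eq_iff mult.commute)
  ultimately have "((f \<circ> p) has_real_derivative f' (v - u)) (at 0 within {0..1})"
    by (simp add: has_field_derivative_def)
  then obtain d where "d > 0" and dec: "\<And>h. h > 0 \<Longrightarrow> h \<in> {0..1} \<Longrightarrow> h < d \<Longrightarrow> f (p h) < f (p 0)"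
    using has_real_derivative_neg_dec_right[of "f \<circ> p" "f' (v - u)" 0 "{0..1}"] neg by auto
  define h where "h = min (d / 2) 1"
  have "h > 0" "h \<in> {0..1}" "h < d" using \<open>d > 0\<close> by (auto simp: h_def)
  then have "f (p h) < f u" using dec by (simp add: p_def)
  with min p_in[OF \<open>h \<in> {0..1}\<close>] show False by fastforce
qed

context
  fixes S :: "'a::euclidean_space set" and N :: "'a \<Rightarrow> real"
    and Xi :: "'a set" and \<omega> :: "'a \<Rightarrow> real" and \<omega>' :: "'a \<Rightarrow> 'a"
  assumes S: "subspace S" and N: "is_norm_on S N"
    and Xi: "closed Xi" "convex Xi" "Xi \<subseteq> S"
    and \<omega>': "\<forall>u\<in>Xi. (\<omega> has_derivative (\<lambda>h. inner (\<omega>' u) h)) (at u within Xi)"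
    and sc: "strongly_convex1 Xi N \<omega> \<omega>'"
begin

lemma bregman_ge_half_sq:
  assumes "u \<in> Xi" "v \<in> Xi"
  shows "(N (v - u))\<^sup>2 / 2 \<le> bregman \<omega> \<omega>' u v"
proof -
  have "\<omega> u + inner (\<omega>' u) (v - u) + 1/2 * (N (v - u))\<^sup>2 \<le> \<omega> v"
    using sc assms unfolding strongly_convex1_def by blast
  then show ?thesis by (simp add: bregman_def)
qed

lemma prox_exists:
  assumes xi: "xi \<in> Xi"
  shows "\<exists>u\<in>Xi. \<forall>v\<in>Xi. gam * inner g u + bregman \<omega> \<omega>' xi u \<le> gam * inner g v + bregman \<omega> \<omega>' xi v"
proof -
  define f where "f v = gam * inner g v + bregman \<omega> \<omega>' xi v" for v
  define K where "K = Xi \<inter> f -` {..f xi}"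
  have "continuous_on Xi \<omega>"
    using \<omega>' has_derivative_continuous continuous_on_eq_continuous_within by blast
  then have f_cont: "continuous_on Xi f"
    unfolding f_def bregman_def by (intro continuous_intros)
  obtain c where c: "c > 0" "\<forall>x\<in>S. c * norm x \<le> N x"
    using is_norm_on_ge_norm[OF S N] by blast
  have "norm (v - xi) \<le> 2 * \<bar>gam\<bar> * norm g / c\<^sup>2" if v: "v \<in> K" for v
  proof -
    have "v \<in> Xi" "f v \<le> f xi" using v by (auto simp: K_def)
    have "v - xi \<in> S" using \<open>v \<in> Xi\<close> xi Xi(3) subspace_diff[OF S] by blast
    then have "(c * norm (v - xi))\<^sup>2 \<le> (N (v - xi))\<^sup>2"
      using c by (intro power_mono) auto
    also have "\<dots> \<le> 2 * (f xi - gam * inner g v)"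
      using bregman_ge_half_sq[OF xi \<open>v \<in> Xi\<close>] \<open>f v \<le> f xi\<close> by (simp add: f_def)
    also have "\<dots> = 2 * (gam * inner g (xi - v))"
      by (simp add: f_def bregman_def inner_diff_right algebra_simps)
    also have "\<dots> \<le> 2 * (\<bar>gam\<bar> * \<bar>inner g (xi - v)\<bar>)"
      by (simp add: abs_mult[symmetric])
    also have "\<dots> \<le> 2 * (\<bar>gam\<bar> * norm g * norm (v - xi))"
      using Cauchy_Schwarz_ineq2[of g "xi - v"]
      by (simp add: norm_minus_commute mult_left_mono mult.assoc)
    finally have "c\<^sup>2 * norm (v - xi) * norm (v - xi) \<le> (2 * \<bar>gam\<bar> * norm g) * norm (v - xi)"
      by (simp add: power2_eq_square algebra_simps)
    then show ?thesis using c(1)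
      by (cases "norm (v - xi) = 0") (auto simp: field_simps dest: mult_right_le_imp_le)
  qed
  then have "bounded K"
    by (intro bounded_subset[OF bounded_cball[of xi "2 * \<bar>gam\<bar> * norm g / c\<^sup>2"]])
      (auto simp: dist_norm norm_minus_commute)
  moreover have "closed K"
    unfolding K_def by (rule continuous_closed_preimage[OF f_cont Xi(1)]) simp
  ultimately have "compact K" by (simp add: compact_eq_bounded_closed)
  moreover have "K \<noteq> {}" "K \<subseteq> Xi" using xi by (auto simp: K_def)
  ultimately obtain u where u: "u \<in> K" "\<forall>v\<in>K. f u \<le> f v"
    using continuous_attains_inf[of K f] continuous_on_subset[OF f_cont] by blast
  have "f u \<le> f v" if "v \<in> Xi" for v
  proof (cases "v \<in> K")
    case False
    then have "f xi < f v" using that by (auto simp: K_def)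
    moreover have "f u \<le> f xi" using u(1) by (simp add: K_def)
    ultimately show ?thesis by linarith
  qed (use u in blast)
  with u show ?thesis unfolding K_def f_def by blast
qed

text \<open>First-order optimality of the prox step, rewritten with the three-point identity of the
  Bregman divergence.\<close>
lemma prox_three_point:
  fixes gam :: real and g :: 'a
  assumes xi: "xi \<in> Xi" and v: "v \<in> Xi"
  defines "u \<equiv> prox Xi \<omega> \<omega>' gam g xi"
  shows "u \<in> Xi"
    and "gam * inner g (u - v) + bregman \<omega> \<omega>' xi u \<le> bregman \<omega> \<omega>' xi v - bregman \<omega> \<omega>' u v"
proof -
  define f where "f w = gam * inner g w + bregman \<omega> \<omega>' xi w" for w
  have u_min: "u \<in> Xi \<and> (\<forall>w\<in>Xi. f u \<le> f w)"
    using prox_exists[OF xi, of gam g] unfolding u_def prox_def f_def Bex_def by (rule someI_ex)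
  then show "u \<in> Xi" ..
  have "(f has_derivative (\<lambda>h. gam * inner g h + (inner (\<omega>' u) h - inner (\<omega>' xi) h)))
      (at u within Xi)"
    unfolding f_def bregman_def using \<omega>' u_min by (auto intro!: derivative_eq_intros)
  then have "0 \<le> gam * inner g (v - u) + (inner (\<omega>' u) (v - u) - inner (\<omega>' xi) (v - u))"
    using min_on_convex_imp_derivative_nonneg[OF Xi(2) _ v] u_min by blast
  moreover have "inner (\<omega>' u) (v - u) - inner (\<omega>' xi) (v - u)
      = bregman \<omega> \<omega>' xi v - bregman \<omega> \<omega>' u v - bregman \<omega> \<omega>' xi u"
    by (simp add: bregman_def inner_diff_right algebra_simps)
  ultimately show "gam * inner g (u - v) + bregman \<omega> \<omega>' xi u
      \<le> bregman \<omega> \<omega>' xi v - bregman \<omega> \<omega>' u v"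
    by (simp add: inner_diff_right algebra_simps)
qed

end

lemma Pi_pmf_support_component:
  assumes "finite A" "f \<in> set_pmf (Pi_pmf A d (\<lambda>_. p))" "t \<in> A"
  shows "f t \<in> set_pmf p"
  using assms by (auto simp: set_Pi_pmf PiE_dflt_def)

lemma finite_set_Pi_pmf:
  "finite A \<Longrightarrow> finite (set_pmf p) \<Longrightarrow> finite (set_pmf (Pi_pmf A d (\<lambda>_. p)))"
  by (auto simp: set_Pi_pmf)

context
  fixes S :: "nat \<Rightarrow> (nat \<Rightarrow> 'i) \<Rightarrow> 's" and stp :: "'i \<Rightarrow> 's \<Rightarrow> 's" and init :: 's
  assumes S_0: "\<And>f. S 0 f = init" and S_Suc: "\<And>k f. S (Suc k) f = stp (f (Suc k)) (S k f)"
begin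

lemma iterate_cong: "(\<And>t. t \<in> {1..k} \<Longrightarrow> f t = g t) \<Longrightarrow> S k f = S k g"
  by (induction k) (auto simp: S_0 S_Suc)

lemma iterate_in_invariant:
  assumes "init \<in> I" "\<And>s i. s \<in> I \<Longrightarrow> i \<in> A \<Longrightarrow> stp i s \<in> I"
  shows "(\<And>t. t \<in> {1..k} \<Longrightarrow> f t \<in> A) \<Longrightarrow> S k f \<in> I"
  using assms by (induction k) (auto simp: S_0 S_Suc)

lemma expectation_iterate_le:
  fixes Psi :: "'s \<Rightarrow> real"
  assumes p: "finite (set_pmf p)" and "c \<ge> 0"
    and I: "init \<in> I" "\<And>s i. s \<in> I \<Longrightarrow> i \<in> set_pmf p \<Longrightarrow> stp i s \<in> I"
    and decay: "\<And>s. s \<in> I \<Longrightarrow> measure_pmf.expectation p (\<lambda>i. Psi (stp i s)) \<le> c * Psi s"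
  shows "measure_pmf.expectation (Pi_pmf {1..k} d (\<lambda>_. p)) (\<lambda>f. Psi (S k f)) \<le> c ^ k * Psi init"
proof (induction k)
  case 0
  then show ?case by (simp add: S_0)
next
  case (Suc k)
  let ?M = "Pi_pmf {1..k} d (\<lambda>_. p)"
  have fin: "finite (set_pmf ?M)" using p by (intro finite_set_Pi_pmf) auto
  have upd: "S (Suc k) (f(Suc k := y)) = stp y (S k f)" for f y
    using iterate_cong[of k "f(Suc k := y)" f] by (simp add: S_Suc)
  have "{1..Suc k} = insert (Suc k) {1..k}" by auto
  then have "measure_pmf.expectation (Pi_pmf {1..Suc k} d (\<lambda>_. p)) (\<lambda>f. Psi (S (Suc k) f))
      = measure_pmf.expectation (p \<bind> (\<lambda>y. map_pmf (\<lambda>f. f(Suc k := y)) ?M)) (\<lambda>f. Psi (S (Suc k) f))"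
    by (simp add: Pi_pmf_insert' map_pmf_def)
  also have "\<dots> = (\<Sum>y\<in>set_pmf p. pmf p y * measure_pmf.expectation ?M (\<lambda>f. Psi (stp y (S k f))))"
    using p fin by (subst pmf_expectation_bind[of "set_pmf p"]) (auto simp: upd)
  also have "\<dots> = measure_pmf.expectation ?M
      (\<lambda>f. measure_pmf.expectation p (\<lambda>y. Psi (stp y (S k f))))"
    using p fin
    by (simp add: integral_measure_pmf_real[OF p] integral_sum integrable_measure_pmf_finite
        sum_distrib_left mult.commute)
  also have "\<dots> \<le> measure_pmf.expectation ?M (\<lambda>f. c * Psi (S k f))"
  proof (intro integral_mono_AE integrable_measure_pmf_finite[OF fin])
    have "S k f \<in> I" if "f \<in> set_pmf ?M" for f
      using iterate_in_invariant[of I "set_pmf p" k f] I Pi_pmf_support_component[OF _ that]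
      by auto
    then show "AE f in measure_pmf ?M. measure_pmf.expectation p (\<lambda>y. Psi (stp y (S k f)))
        \<le> c * Psi (S k f)"
      using decay by (simp add: AE_measure_pmf_iff)
  qed
  also have "\<dots> \<le> c * (c ^ k * Psi init)"
    using Suc.IH \<open>c \<ge> 0\<close> by (simp add: mult_left_mono)
  finally show ?case by simp
qed

end

lemma blk_proj_component: "blk_proj blk i x $ j = (if blk j = i then x $ j else 0)"
  by (simp add: blk_proj_def)

lemma blk_proj_add: "blk_proj blk i (x + y) = blk_proj blk i x + blk_proj blk i y"
  by (simp add: vec_eq_iff blk_proj_component)

lemma blk_proj_diff: "blk_proj blk i (x - y) = blk_proj blk i x - blk_proj blk i y"
  by (simp add: vec_eq_iff blk_proj_component)

lemma blk_proj_zero [simp]: "blk_proj blk i 0 = 0"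
  by (simp add: vec_eq_iff blk_proj_component)

lemma blk_proj_in_blk_space: "blk_proj blk i x \<in> blk_space blk i"
  by (simp add: blk_space_def blk_proj_component)

lemma blk_proj_blk_space:
  "x \<in> blk_space blk i \<Longrightarrow> blk_proj blk j x = (if j = i then x else 0)"
  by (auto simp: vec_eq_iff blk_proj_component blk_space_def)

lemma blk_proj_idem [simp]: "blk_proj blk i (blk_proj blk i x) = blk_proj blk i x"
  by (simp add: blk_proj_blk_space[OF blk_proj_in_blk_space])

lemma subspace_blk_space: "subspace (blk_space blk i)"
  by (simp add: subspace_def blk_space_def)

lemma inner_blk_proj_commute: "inner (blk_proj blk i x) y = inner x (blk_proj blk i y)"
  by (auto simp: inner_vec_def blk_proj_component intro!: sum.cong)

lemma sum_blk_proj: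
  assumes "\<forall>j. blk j < b"
  shows "(\<Sum>i<b. blk_proj blk i x) = x"
  using assms by (simp add: vec_eq_iff sum_component blk_proj_component)

lemma inner_eq_sum_blk_proj:
  assumes "\<forall>j. blk j < b"
  shows "inner x y = (\<Sum>i<b. inner (blk_proj blk i x) (blk_proj blk i y))"
proof -
  have "inner x y = (\<Sum>i<b. inner (blk_proj blk i x) y)"
    by (subst (1) sum_blk_proj[OF assms, symmetric]) (simp add: inner_sum_left)
  then show ?thesis by (simp add: inner_blk_proj_commute)
qed

lemma blk_V_update:
  assumes "i < b" and "\<And>j. j \<noteq> i \<Longrightarrow> blk_proj blk j y = blk_proj blk j x"
  shows "blk_V b blk \<omega> \<omega>' y z = blk_V b blk \<omega> \<omega>' x z
    - bregman (\<omega> i) (\<omega>' i) (blk_proj blk i x) (blk_proj blk i z)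
    + bregman (\<omega> i) (\<omega>' i) (blk_proj blk i y) (blk_proj blk i z)"
proof -
  let ?B = "\<lambda>j x. bregman (\<omega> j) (\<omega>' j) (blk_proj blk j x) (blk_proj blk j z)"
  have "(\<Sum>j<b. ?B j y) - (\<Sum>j<b. ?B j x) = (\<Sum>j<b. if j = i then ?B i y - ?B i x else 0)"
    unfolding sum_subtractf[symmetric] using assms(2) by (intro sum.cong) auto
  also have "\<dots> = ?B i y - ?B i x"
    using assms(1) by simp
  finally show ?thesis by (simp add: blk_V_def)
qed

context
  fixes blk :: "'n::finite \<Rightarrow> nat" and b :: nat and N :: "nat \<Rightarrow> real^'n \<Rightarrow> real"
  assumes norms: "\<forall>i<b. is_norm_on (blk_space blk i) (N i)"
begin

lemma blk_norm_blk_space: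
  assumes "i < b" "x \<in> blk_space blk i"
  shows "blk_norm b blk N x = N i x"
proof -
  have "(\<Sum>j<b. (N j (blk_proj blk j x))\<^sup>2) = (\<Sum>j<b. if j = i then (N i x)\<^sup>2 else 0)"
    using assms norms
    by (intro sum.cong) (auto simp: blk_proj_blk_space is_norm_on_zero[OF subspace_blk_space])
  then show ?thesis
    using assms norms is_norm_on_nonneg[OF subspace_blk_space, of blk i "N i" x]
    by (simp add: blk_norm_def)
qed

lemma blk_norm_zero: "blk_norm b blk N 0 = 0"
proof -
  have "N i 0 = 0" if "i < b" for i
    using norms that is_norm_on_zero[OF subspace_blk_space, of blk i "N i"] by blast
  then show ?thesis by (simp add: blk_norm_def)
qed

end

locale sboe_analysis =
  fixes blk :: "'n::finite \<Rightarrow> nat" and b :: nat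
    and Xs :: "nat \<Rightarrow> (real^'n) set" and N :: "nat \<Rightarrow> real^'n \<Rightarrow> real"
    and F :: "real^'n \<Rightarrow> real^'n" and L :: real
    and \<omega> :: "nat \<Rightarrow> real^'n \<Rightarrow> real" and \<omega>' :: "nat \<Rightarrow> real^'n \<Rightarrow> real^'n"
    and xstar :: "real^'n" and \<mu> \<gamma> lam :: real
  assumes b: "b \<ge> 1" and blk: "\<forall>j. blk j < b"
    and Xs: "\<forall>i<b. Xs i \<noteq> {} \<and> closed (Xs i) \<and> convex (Xs i) \<and> Xs i \<subseteq> blk_space blk i"
    and norms: "\<forall>i<b. is_norm_on (blk_space blk i) (N i)"
    and L: "L > 0"
    and Lip: "\<forall>i<b. \<forall>x\<in>prod_set blk b Xs. \<forall>y\<in>prod_set blk b Xs.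
               dual_norm (blk_space blk i) (N i) (blk_proj blk i (F x) - blk_proj blk i (F y))
                 \<le> L * blk_norm b blk N (x - y)"
    and deriv: "\<forall>i<b. \<forall>u\<in>Xs i. (\<omega> i has_derivative (\<lambda>h. inner (\<omega>' i u) h)) (at u within Xs i)"
    and sc: "\<forall>i<b. strongly_convex1 (Xs i) (N i) (\<omega> i) (\<omega>' i)"
    and xstar: "xstar \<in> prod_set blk b Xs"
    and mu: "\<mu> > 0"
    and growth: "\<forall>x\<in>prod_set blk b Xs. inner (F x) (x - xstar) \<ge> 2 * \<mu> * blk_V b blk \<omega> \<omega>' x xstar"
    and gamma: "\<gamma> = 1 / (2 * L * real b)"
    and lambda: "lam = (real b + 2 * (real b - 1) * \<mu> * \<gamma>) / (1 + 2 * \<mu> * \<gamma>)"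
begin

abbreviation "X \<equiv> prod_set blk b Xs"
abbreviation "P \<equiv> blk_proj blk"
abbreviation "B i \<equiv> bregman (\<omega> i) (\<omega>' i)"
abbreviation "V x \<equiv> blk_V b blk \<omega> \<omega>' x xstar"
abbreviation "nrm \<equiv> blk_norm b blk N"
abbreviation "Phi x \<equiv> inner (F x) (x - xstar)"

definition "q = (real b - 1) / real b"
text \<open>\<open>\<rho> ^ t\<close> is the weight \<open>\<theta>\<^sub>t\<close> of the paper.\<close>
definition "\<rho> = (1 + 2 * \<mu> * \<gamma>) / (1 + 2 * \<mu> * \<gamma> * q)"

lemma gamma_pos: "\<gamma> > 0" and gamma_L: "\<gamma> * L = 1 / (2 * real b)"
  using L b by (simp_all add: gamma)

lemma q_bounds: "0 \<le> q" "q \<le> 1"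
  using b by (auto simp: q_def)

lemma rho_eq: "\<rho> * (1 + 2 * \<mu> * \<gamma> * q) = 1 + 2 * \<mu> * \<gamma>"
proof -
  have "0 < 1 + 2 * \<mu> * \<gamma> * q"
    using q_bounds mu gamma_pos by (simp add: add_pos_nonneg)
  then show ?thesis by (simp add: \<rho>_def)
qed

lemma rho_ge_1: "1 \<le> \<rho>"
proof -
  have "2 * \<mu> * \<gamma> * q \<le> 2 * \<mu> * \<gamma>" "0 \<le> 2 * \<mu> * \<gamma> * q"
    using q_bounds mu gamma_pos by (simp_all add: mult_left_le)
  then show ?thesis by (simp add: \<rho>_def field_simps)
qed

lemma lam_eq: "lam = real b / \<rho>"
proof -
  have "0 < 1 + 2 * \<mu> * \<gamma> * q" "0 < 1 + 2 * \<mu> * \<gamma>"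
    using q_bounds mu gamma_pos by (simp_all add: add_pos_nonneg)
  moreover have "real b * (1 + 2 * \<mu> * \<gamma> * q) = real b + 2 * (real b - 1) * \<mu> * \<gamma>"
    using b by (simp add: q_def field_simps)
  ultimately show ?thesis by (simp add: lambda \<rho>_def field_simps)
qed

lemma is_norm_on_block: "i < b \<Longrightarrow> is_norm_on (blk_space blk i) (N i)"
  using norms by blast

lemma blk_proj_in_Xs: "x \<in> X \<Longrightarrow> i < b \<Longrightarrow> P i x \<in> Xs i"
  by (simp add: prod_set_def)

lemma bregman_block_ge_half_sq:
  "i < b \<Longrightarrow> u \<in> Xs i \<Longrightarrow> v \<in> Xs i \<Longrightarrow> (N i (v - u))\<^sup>2 / 2 \<le> B i u v"
  using bregman_ge_half_sq[OF subspace_blk_space is_norm_on_block] Xs deriv sc by blast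

lemma prox_block_three_point:
  fixes gam :: real and g :: "real^'n"
  assumes "i < b" "xi \<in> Xs i" "v \<in> Xs i"
  defines "u \<equiv> prox (Xs i) (\<omega> i) (\<omega>' i) gam g xi"
  shows "u \<in> Xs i" and "gam * inner g (u - v) + B i xi u \<le> B i xi v - B i u v"
  using prox_three_point[OF subspace_blk_space is_norm_on_block[OF assms(1)] _ _ _ _ _ assms(2,3)]
    Xs deriv sc assms(1) unfolding u_def by blast+

lemma sum_sq_blk_norm_le_V:
  assumes "x \<in> X"
  shows "(\<Sum>j<b. (N j (P j (x - xstar)))\<^sup>2) \<le> 2 * V x"
proof -
  have "(N j (P j (x - xstar)))\<^sup>2 \<le> 2 * B j (P j x) (P j xstar)" if j: "j < b" for j
    using bregman_block_ge_half_sq[OF j blk_proj_in_Xs[OF assms j] blk_proj_in_Xs[OF xstar j]]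
      is_norm_on_minus_commute[OF subspace_blk_space is_norm_on_block[OF j]
        blk_proj_in_blk_space blk_proj_in_blk_space]
    by (simp add: blk_proj_diff)
  then show ?thesis
    by (auto simp: blk_V_def sum_distrib_left intro: sum_mono)
qed

lemma V_nonneg: "x \<in> X \<Longrightarrow> 0 \<le> V x"
  using sum_sq_blk_norm_le_V[of x] sum_nonneg[of "{..<b}" "\<lambda>j. (N j (P j (x - xstar)))\<^sup>2"]
  by simp

lemma Phi_ge: "x \<in> X \<Longrightarrow> 2 * \<mu> * V x \<le> Phi x"
  using growth by blast

lemma Phi_nonneg:
  assumes "x \<in> X"
  shows "0 \<le> Phi x"
proof -
  have "0 \<le> 2 * \<mu> * V x" using V_nonneg[OF assms] mu by simp
  with Phi_ge[OF assms] show ?thesis by linarith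
qed

lemma inner_diff_F_le:
  assumes "x \<in> X" "y \<in> X" "i < b" and w: "w \<in> blk_space blk i"
  shows "\<bar>inner (F x - F y) w\<bar> \<le> L * nrm (x - y) * N i w"
proof -
  let ?D = "P i (F x) - P i (F y)"
  have eq: "inner (F x - F y) w = inner ?D w" "inner (F x - F y) (- w) = inner ?D (- w)"
    using w subspace_neg[OF subspace_blk_space]
    by (simp_all add: inner_blk_proj_commute blk_proj_blk_space flip: blk_proj_diff)
  have "inner ?D w \<le> dual_norm (blk_space blk i) (N i) ?D * N i w"
    "inner ?D (- w) \<le> dual_norm (blk_space blk i) (N i) ?D * N i w"
    using inner_le_dual_norm[OF subspace_blk_space is_norm_on_block[OF assms(3)]] w
      is_norm_on_minus[OF subspace_blk_space is_norm_on_block[OF assms(3)] w]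
      subspace_neg[OF subspace_blk_space] by metis+
  moreover have "dual_norm (blk_space blk i) (N i) ?D * N i w \<le> L * nrm (x - y) * N i w"
    using Lip assms is_norm_on_nonneg[OF subspace_blk_space is_norm_on_block[OF assms(3)] w]
    by (intro mult_right_mono) auto
  ultimately show ?thesis using eq by (simp add: abs_le_iff)
qed

definition F_extra :: "real^'n \<Rightarrow> real^'n \<Rightarrow> real^'n" where
  "F_extra xp xc = F xc + lam *\<^sub>R (F xc - F xp)"

definition update :: "nat \<Rightarrow> real^'n \<Rightarrow> real^'n \<Rightarrow> real^'n" where
  "update i xp xc = xc - P i xc + prox (Xs i) (\<omega> i) (\<omega>' i) \<gamma> (P i (F_extra xp xc)) (P i xc)"

definition step :: "nat \<Rightarrow> ((real^'n) \<times> (real^'n)) \<Rightarrow> (real^'n) \<times> (real^'n)" where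
  "step i = (\<lambda>(xp, xc). (xc, update i xp xc))"

definition lyap :: "(real^'n) \<times> (real^'n) \<Rightarrow> real" where
  "lyap = (\<lambda>(xp, xc). V xc + \<gamma> * q * Phi xc
     - (\<gamma> * inner (F xc - F xp) (xc - xstar) - (nrm (xc - xp))\<^sup>2 / 4) / \<rho>)"

lemma blk_proj_update:
  assumes "xc \<in> X" "i < b"
  shows "P j (update i xp xc)
    = (if j = i then prox (Xs i) (\<omega> i) (\<omega>' i) \<gamma> (P i (F_extra xp xc)) (P i xc) else P j xc)"
proof -
  have "prox (Xs i) (\<omega> i) (\<omega>' i) \<gamma> (P i (F_extra xp xc)) (P i xc) \<in> blk_space blk i"
    using prox_block_three_point(1)[OF assms(2) blk_proj_in_Xs[OF assms] blk_proj_in_Xs[OF assms]]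
      Xs assms(2) by blast
  then show ?thesis
    by (simp add: update_def blk_proj_add blk_proj_diff blk_proj_blk_space
        blk_proj_blk_space[OF blk_proj_in_blk_space])
qed

lemma update_in_X: "xc \<in> X \<Longrightarrow> i < b \<Longrightarrow> update i xp xc \<in> X"
  using prox_block_three_point(1)[OF _ blk_proj_in_Xs blk_proj_in_Xs]
  by (auto simp: prod_set_def blk_proj_update)

lemma update_diff_in_blk_space:
  assumes "xc \<in> X" "i < b"
  shows "update i xp xc - xc \<in> blk_space blk i"
proof -
  have "update i xp xc - xc = P i (update i xp xc) - P i xc"
    using blk_proj_update[OF assms] by (simp add: update_def)
  then show ?thesis
    by (simp add: subspace_diff[OF subspace_blk_space] blk_proj_in_blk_space)
qed

lemma update_descent:
  fixes xp :: "real^'n"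
  assumes xc: "xc \<in> X" and i: "i < b"
  defines "xn \<equiv> update i xp xc"
  shows "\<gamma> * inner (P i (F_extra xp xc)) (xn - xstar) + (nrm (xn - xc))\<^sup>2 / 2 \<le> V xc - V xn"
proof -
  define u where "u = P i xn"
  have u_prox: "u = prox (Xs i) (\<omega> i) (\<omega>' i) \<gamma> (P i (F_extra xp xc)) (P i xc)"
    using blk_proj_update[OF xc i] by (simp add: u_def xn_def)
  have u_Xs: "u \<in> Xs i" "P i xc \<in> Xs i" "P i xstar \<in> Xs i"
    using blk_proj_in_Xs update_in_X xc xstar i by (auto simp: u_def xn_def)
  have "\<gamma> * inner (P i (F_extra xp xc)) (u - P i xstar) + B i (P i xc) u
      \<le> B i (P i xc) (P i xstar) - B i u (P i xstar)"
    unfolding u_prox using prox_block_three_point(2)[OF i u_Xs(2,3)] .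
  moreover have "V xn = V xc - B i (P i xc) (P i xstar) + B i u (P i xstar)"
    unfolding u_def xn_def by (rule blk_V_update[OF i]) (simp add: blk_proj_update[OF xc i])
  moreover have "(nrm (xn - xc))\<^sup>2 / 2 \<le> B i (P i xc) u"
  proof -
    have "xn - xc = u - P i xc"
      using blk_proj_blk_space[OF update_diff_in_blk_space[OF xc i], of i]
      by (simp add: u_def xn_def blk_proj_diff)
    moreover have "nrm (xn - xc) = N i (xn - xc)"
      using blk_norm_blk_space[OF norms i] update_diff_in_blk_space[OF xc i] by (simp add: xn_def)
    ultimately show ?thesis
      using bregman_block_ge_half_sq[OF i u_Xs(2,1)] by simp
  qed
  moreover have "\<gamma> * inner (P i (F_extra xp xc)) (u - P i xstar)
      = \<gamma> * inner (P i (F_extra xp xc)) (xn - xstar)"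
    by (simp add: u_def inner_blk_proj_commute flip: blk_proj_diff)
  ultimately show ?thesis by linarith
qed

lemma cross_term_bound:
  assumes "x \<in> X" "y \<in> X" "i < b" "d \<in> blk_space blk i"
  shows "- (((nrm (x - y))\<^sup>2 + (nrm d)\<^sup>2) / (4 * \<rho>)) \<le> \<gamma> * (lam * inner (F x - F y) d)"
proof -
  define a e where "a = nrm (x - y)" and "e = nrm d"
  have "\<gamma> * lam * L = (\<gamma> * L) * real b / \<rho>"
    by (simp add: lam_eq)
  also have "\<dots> = 1 / (2 * \<rho>)"
    using gamma_L b by simp
  finally have lam_L: "\<gamma> * lam * L = 1 / (2 * \<rho>)" .
  have "\<bar>inner (F x - F y) d\<bar> \<le> L * a * e"
    using inner_diff_F_le[OF assms] blk_norm_blk_space[OF norms assms(3,4)]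
    by (simp add: a_def e_def)
  moreover have lam_pos: "0 \<le> \<gamma> * lam"
    using gamma_pos rho_ge_1 by (simp add: lam_eq)
  ultimately have "\<gamma> * lam * \<bar>inner (F x - F y) d\<bar> \<le> \<gamma> * lam * (L * a * e)"
    by (rule mult_left_mono)
  also have "\<dots> = (\<gamma> * lam * L) * (a * e)"
    by (simp add: algebra_simps)
  also have "\<dots> = a * e / (2 * \<rho>)"
    by (simp add: lam_L)
  also have "\<dots> \<le> (a\<^sup>2 + e\<^sup>2) / (4 * \<rho>)"
    using rho_ge_1 sum_squares_bound[of a e] by (simp add: field_simps)
  finally have "\<gamma> * lam * \<bar>inner (F x - F y) d\<bar> \<le> ((nrm (x - y))\<^sup>2 + (nrm d)\<^sup>2) / (4 * \<rho>)"
    by (simp add: a_def e_def)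
  moreover have "\<gamma> * lam * (- \<bar>inner (F x - F y) d\<bar>) \<le> \<gamma> * lam * inner (F x - F y) d"
    using lam_pos by (intro mult_left_mono) auto
  ultimately show ?thesis by (simp add: mult.assoc)
qed

lemma lyap_growth:
  assumes "x \<in> X"
  shows "\<rho> * (V x + \<gamma> * q * Phi x) \<le> V x + \<gamma> * Phi x"
proof -
  have "\<rho> * q \<le> 1"
  proof -
    have "\<rho> * q * (1 + 2 * \<mu> * \<gamma> * q) = q * (\<rho> * (1 + 2 * \<mu> * \<gamma> * q))"
      by (simp add: algebra_simps)
    also have "\<dots> = q * (1 + 2 * \<mu> * \<gamma>)"
      by (simp only: rho_eq)
    also have "\<dots> \<le> 1 * (1 + 2 * \<mu> * \<gamma> * q)"
      using q_bounds mu gamma_pos by (simp add: algebra_simps)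
    finally show ?thesis
      using q_bounds mu gamma_pos by (simp add: add_pos_nonneg mult_le_cancel_right_pos)
  qed
  then have "(1 - \<rho> * q) * \<gamma> * (2 * \<mu> * V x) \<le> (1 - \<rho> * q) * \<gamma> * Phi x"
    using Phi_ge[OF assms] gamma_pos by (intro mult_left_mono) auto
  moreover have "\<rho> - 1 = 2 * \<mu> * \<gamma> * (1 - \<rho> * q)"
    using rho_eq by (simp add: algebra_simps)
  then have "(\<rho> - 1) * V x = (1 - \<rho> * q) * \<gamma> * (2 * \<mu> * V x)"
    by (metis mult.commute mult.left_commute)
  moreover have "\<rho> * (V x + \<gamma> * q * Phi x) - (V x + \<gamma> * Phi x)
      = (\<rho> - 1) * V x - (1 - \<rho> * q) * \<gamma> * Phi x"
    by (simp add: algebra_simps)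
  ultimately show ?thesis by linarith
qed

lemma inner_F_extra_update:
  fixes xp :: "real^'n"
  assumes "xc \<in> X" "i < b"
  defines "xn \<equiv> update i xp xc"
  shows "inner (P i (F_extra xp xc)) (xn - xstar) = inner (P i (F_extra xp xc)) (xc - xstar)
    + (Phi xn - Phi xc - inner (F xn - F xc) (xn - xstar)) + lam * inner (F xc - F xp) (xn - xc)"
proof -
  have "inner (P i (F_extra xp xc)) (xn - xc) = inner (F_extra xp xc) (xn - xc)"
    using blk_proj_blk_space[OF update_diff_in_blk_space[OF assms(1,2)], of i]
    by (simp add: inner_blk_proj_commute xn_def)
  then show ?thesis
    by (simp add: F_extra_def inner_add_left inner_diff_left inner_diff_right algebra_simps)
qed

lemma update_lyap_bound:
  assumes xp: "xp \<in> X" and xc: "xc \<in> X" and i: "i < b"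
  shows "\<rho> * lyap (step i (xp, xc)) \<le> V xc + \<gamma> * Phi xc
    - \<gamma> * inner (P i (F_extra xp xc)) (xc - xstar) + (nrm (xc - xp))\<^sup>2 / (4 * \<rho>)"
proof -
  define xn where "xn = update i xp xc"
  define a e where "a = nrm (xc - xp)" and "e = nrm (xn - xc)"
  define In ID where "In = inner (F xn - F xc) (xn - xstar)"
    and "ID = inner (F xc - F xp) (xn - xc)"
  have "\<gamma> * inner (P i (F_extra xp xc)) (xn - xstar)
      = \<gamma> * (inner (P i (F_extra xp xc)) (xc - xstar) + (Phi xn - Phi xc - In) + lam * ID)"
    by (simp only: inner_F_extra_update[OF xc i] xn_def In_def ID_def)
  also have "\<dots> = \<gamma> * inner (P i (F_extra xp xc)) (xc - xstar) + \<gamma> * Phi xn - \<gamma> * Phi xc - \<gamma> * In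
      + \<gamma> * (lam * ID)"
    by (simp only: distrib_left right_diff_distrib)
  finally have "\<gamma> * inner (P i (F_extra xp xc)) (xc - xstar) + \<gamma> * Phi xn - \<gamma> * Phi xc - \<gamma> * In
      + \<gamma> * (lam * ID) + e\<^sup>2 / 2 \<le> V xc - V xn"
    using update_descent[OF xc i, of xp] unfolding e_def xn_def by linarith
  moreover have "- (a\<^sup>2 / (4 * \<rho>) + e\<^sup>2 / (4 * \<rho>)) \<le> \<gamma> * (lam * ID)"
    using cross_term_bound[OF xc xp i update_diff_in_blk_space[OF xc i]]
    by (simp add: a_def e_def ID_def xn_def add_divide_distrib)
  moreover have "\<rho> * (V xn + \<gamma> * q * Phi xn) \<le> V xn + \<gamma> * Phi xn"
    using lyap_growth update_in_X[OF xc i] by (simp add: xn_def)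
  moreover have "\<rho> * lyap (step i (xp, xc)) = \<rho> * (V xn + \<gamma> * q * Phi xn) - \<gamma> * In + e\<^sup>2 / 4"
    using rho_ge_1 by (simp add: lyap_def step_def xn_def e_def In_def field_simps)
  moreover have "e\<^sup>2 / (4 * \<rho>) \<le> e\<^sup>2 / 4"
    using rho_ge_1 by (intro divide_left_mono) auto
  ultimately show ?thesis
    unfolding a_def by linarith
qed

lemma expectation_lyap_step:
  assumes xp: "xp \<in> X" and xc: "xc \<in> X"
  shows "measure_pmf.expectation (pmf_of_set {..<b}) (\<lambda>i. lyap (step i (xp, xc)))
    \<le> lyap (xp, xc) / \<rho>"
proof -
  define K where "K = V xc + \<gamma> * Phi xc + (nrm (xc - xp))\<^sup>2 / (4 * \<rho>)"
  define D where "D = inner (F xc - F xp) (xc - xstar)"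
  have b_pos: "real b > 0" using b by simp
  have "\<rho> * (\<Sum>i<b. lyap (step i (xp, xc)))
      \<le> (\<Sum>i<b. K - \<gamma> * inner (P i (F_extra xp xc)) (xc - xstar))"
    unfolding sum_distrib_left K_def
    using update_lyap_bound[OF xp xc] by (intro sum_mono) (simp add: algebra_simps)
  also have "\<dots> = real b * K - \<gamma> * inner (F_extra xp xc) (xc - xstar)"
    by (simp add: sum_subtractf inner_sum_left[symmetric] sum_distrib_left[symmetric]
        sum_blk_proj[OF blk])
  also have "\<dots> = real b * K - \<gamma> * Phi xc - \<gamma> * lam * D"
    by (simp add: F_extra_def D_def inner_add_left algebra_simps)
  also have "\<dots> = real b * lyap (xp, xc)"
    using rho_ge_1 b_pos unfolding K_def lyap_def D_def lam_eq q_def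
    by (simp add: field_simps)
  finally have "\<rho> * (\<Sum>i<b. lyap (step i (xp, xc))) \<le> real b * lyap (xp, xc)" .
  moreover have "{..<b} \<noteq> {}" using b by (simp add: lessThan_empty_iff)
  ultimately show ?thesis
    using b_pos rho_ge_1 by (simp add: integral_pmf_of_set field_simps)
qed

lemma lyap_coupling_bound:
  assumes xp: "xp \<in> X" and xc: "xc \<in> X"
  shows "\<gamma> * inner (F xc - F xp) (xc - xstar) - (nrm (xc - xp))\<^sup>2 / 4 \<le> V xc / (2 * real b)"
proof -
  define a where "a = nrm (xc - xp)"
  define n where "n j = N j (P j (xc - xstar))" for j
  define s where "s = (\<Sum>j<b. n j)"
  have b_pos: "real b > 0" using b by simp
  have "inner (F xc - F xp) (xc - xstar) = (\<Sum>j<b. inner (F xc - F xp) (P j (xc - xstar)))"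
    by (subst inner_eq_sum_blk_proj[OF blk]) (simp add: inner_blk_proj_commute)
  also have "\<dots> \<le> (\<Sum>j<b. L * a * n j)"
    using inner_diff_F_le[OF xc xp _ blk_proj_in_blk_space]
    by (intro sum_mono) (auto simp: a_def n_def abs_le_iff)
  also have "\<dots> = L * a * s"
    by (simp add: s_def sum_distrib_left)
  finally have "\<gamma> * inner (F xc - F xp) (xc - xstar) \<le> \<gamma> * (L * a * s)"
    using gamma_pos by simp
  also have "\<dots> = (2 * a * (s / real b)) / 4"
    using gamma_L b_pos by (simp add: field_simps)
  also have "\<dots> \<le> (a\<^sup>2 + (s / real b)\<^sup>2) / 4"
    using sum_squares_bound[of a "s / real b"] by simp
  also have "\<dots> \<le> a\<^sup>2 / 4 + V xc / (2 * real b)"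
  proof -
    have "s\<^sup>2 \<le> real b * (\<Sum>j<b. (n j)\<^sup>2)"
      using sum_squared_le_sum_of_squares[of n "{..<b}"] by (simp add: s_def mult.commute)
    also have "\<dots> \<le> real b * (2 * V xc)"
      using sum_sq_blk_norm_le_V[OF xc] b_pos by (simp add: n_def)
    finally show ?thesis
      using b_pos by (simp add: power_divide power2_eq_square field_simps)
  qed
  finally show ?thesis by (simp add: a_def)
qed

lemma lyap_ge_half_V:
  assumes "xp \<in> X" "xc \<in> X"
  shows "V xc / 2 \<le> lyap (xp, xc)"
proof -
  define C where "C = \<gamma> * inner (F xc - F xp) (xc - xstar) - (nrm (xc - xp))\<^sup>2 / 4"
  have "C / \<rho> \<le> V xc / 2"
  proof (cases "C \<le> 0")
    case True
    then have "C / \<rho> \<le> 0" using rho_ge_1 by (simp add: divide_nonpos_pos)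
    then show ?thesis using V_nonneg[OF assms(2)] by linarith
  next
    case False
    have "C / \<rho> \<le> C" using False rho_ge_1 by (simp add: divide_le_eq)
    also have "\<dots> \<le> V xc / (2 * real b)" using lyap_coupling_bound[OF assms] by (simp add: C_def)
    also have "\<dots> \<le> V xc / 2" using V_nonneg[OF assms(2)] b by (intro divide_left_mono) auto
    finally show ?thesis .
  qed
  moreover have "0 \<le> \<gamma> * q * Phi xc"
    using gamma_pos q_bounds Phi_nonneg[OF assms(2)] by simp
  ultimately show ?thesis by (simp add: lyap_def C_def)
qed

lemma lyap_diag: "lyap (x, x) = V x + \<gamma> * q * Phi x"
  by (simp add: lyap_def blk_norm_zero[OF norms])

lemma sboe_st_Suc:
  "sboe_st blk Xs \<omega> \<omega>' F (\<lambda>_. \<gamma>) (\<lambda>_. lam) x1 seq (Suc t)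
    = step (seq (Suc t)) (sboe_st blk Xs \<omega> \<omega>' F (\<lambda>_. \<gamma>) (\<lambda>_. lam) x1 seq t)"
  by (simp add: step_def update_def F_extra_def case_prod_beta Let_def)

lemma expectation_V_sboe_le:
  assumes x1: "x1 \<in> X"
  shows "measure_pmf.expectation (Pi_pmf {1..k} d (\<lambda>_. pmf_of_set {..<b}))
      (\<lambda>seq. V (sboe_next blk Xs \<omega> \<omega>' F (\<lambda>_. \<gamma>) (\<lambda>_. lam) x1 seq k))
    \<le> 2 * ((1 / \<rho>) ^ k * lyap (x1, x1))"
proof -
  let ?S = "\<lambda>k seq. sboe_st blk Xs \<omega> \<omega>' F (\<lambda>_. \<gamma>) (\<lambda>_. lam) x1 seq k"
  let ?M = "Pi_pmf {1..k} d (\<lambda>_. pmf_of_set {..<b})"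
  let ?I = "{s. fst s \<in> X \<and> snd s \<in> X}"
  have blocks: "{..<b} \<noteq> {}" "finite {..<b}" using b by (auto simp: lessThan_empty_iff)
  note iterate = sboe_st.simps(1) sboe_st_Suc
  have inv: "(x1, x1) \<in> ?I" "\<And>s i. s \<in> ?I \<Longrightarrow> i \<in> set_pmf (pmf_of_set {..<b}) \<Longrightarrow> step i s \<in> ?I"
    using x1 blocks by (auto simp: step_def update_in_X)
  have "measure_pmf.expectation ?M (\<lambda>seq. V (snd (?S k seq)))
      \<le> measure_pmf.expectation ?M (\<lambda>seq. 2 * lyap (?S k seq))"
  proof (intro integral_mono_AE integrable_measure_pmf_finite finite_set_Pi_pmf)
    have "?S k seq \<in> ?I" if "seq \<in> set_pmf ?M" for seq
      using iterate_in_invariant[where S = ?S and stp = step and init = "(x1, x1)", OF iterate inv]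
        Pi_pmf_support_component[OF _ that] by auto
    then show "AE seq in measure_pmf ?M. V (snd (?S k seq)) \<le> 2 * lyap (?S k seq)"
      using lyap_ge_half_V by (fastforce simp: AE_measure_pmf_iff)
  qed (use blocks in auto)
  also have "\<dots> \<le> 2 * ((1 / \<rho>) ^ k * lyap (x1, x1))"
  proof -
    have "measure_pmf.expectation (pmf_of_set {..<b}) (\<lambda>i. lyap (step i s)) \<le> 1 / \<rho> * lyap s"
      if "s \<in> ?I" for s
      using that expectation_lyap_step[of "fst s" "snd s"] by simp
    then show ?thesis
      using expectation_iterate_le[where S = ?S and stp = step and init = "(x1, x1)" and c = "1 / \<rho>"
          and Psi = lyap and p = "pmf_of_set {..<b}", OF iterate _ _ inv] rho_ge_1 blocks
      by simp
  qed
  finally show ?thesis by (simp add: sboe_next_def)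
qed

end

theorem corollary4p1:
  fixes blk :: "'n::finite \<Rightarrow> nat" and b :: nat
    and Xs :: "nat \<Rightarrow> (real^'n) set" and N :: "nat \<Rightarrow> real^'n \<Rightarrow> real"
    and F :: "real^'n \<Rightarrow> real^'n" and L :: real
    and \<omega> :: "nat \<Rightarrow> real^'n \<Rightarrow> real" and \<omega>' :: "nat \<Rightarrow> real^'n \<Rightarrow> real^'n"
    and x1 xstar :: "real^'n" and \<mu> \<gamma> lam :: real and k :: nat
  assumes b: "b \<ge> 1" and blk: "\<forall>j. blk j < b"
    and Xs: "\<forall>i<b. Xs i \<noteq> {} \<and> closed (Xs i) \<and> convex (Xs i) \<and> Xs i \<subseteq> blk_space blk i"
    and norms: "\<forall>i<b. is_norm_on (blk_space blk i) (N i)"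
    and L: "L > 0"
    and Lip: "\<forall>i<b. \<forall>x\<in>prod_set blk b Xs. \<forall>y\<in>prod_set blk b Xs.
               dual_norm (blk_space blk i) (N i) (blk_proj blk i (F x) - blk_proj blk i (F y))
                 \<le> L * blk_norm b blk N (x - y)"
    and deriv: "\<forall>i<b. \<forall>u\<in>Xs i. (\<omega> i has_derivative (\<lambda>h. inner (\<omega>' i u) h)) (at u within Xs i)"
    and sc: "\<forall>i<b. strongly_convex1 (Xs i) (N i) (\<omega> i) (\<omega>' i)"
    and x1: "x1 \<in> prod_set blk b Xs"
    and xstar: "xstar \<in> prod_set blk b Xs"
    and VI: "\<forall>x\<in>prod_set blk b Xs. inner (F xstar) (x - xstar) \<ge> 0"
    and mu: "\<mu> > 0"
    and growth: "\<forall>x\<in>prod_set blk b Xs. inner (F x) (x - xstar) \<ge> 2 * \<mu> * blk_V b blk \<omega> \<omega>' x xstar"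
    and gamma: "\<gamma> = 1 / (2 * L * real b)"
    and lambda: "lam = (real b + 2 * (real b - 1) * \<mu> * \<gamma>) / (1 + 2 * \<mu> * \<gamma>)"
  shows "measure_pmf.expectation (Pi_pmf {1..k} undefined (\<lambda>_. pmf_of_set {..<b}))
           (\<lambda>seq. blk_V b blk \<omega> \<omega>'
              (sboe_next blk Xs \<omega> \<omega>' F (\<lambda>_. \<gamma>) (\<lambda>_. lam) x1 seq k) xstar)
         \<le> 2 * ((1 + 2 * \<mu> * ((real b - 1) / real b) * \<gamma>) / (1 + 2 * \<mu> * \<gamma>)) ^ k
             * (blk_V b blk \<omega> \<omega>' x1 xstar
                + ((real b - 1) / real b) * \<gamma> * inner (F x1) (x1 - xstar))"
proof -
  interpret sboe_analysis blk b Xs N F L \<omega> \<omega>' xstar \<mu> \<gamma> lam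
    using b blk Xs norms L Lip deriv sc xstar mu growth gamma lambda by unfold_locales auto
  have "(1 + 2 * \<mu> * ((real b - 1) / real b) * \<gamma>) / (1 + 2 * \<mu> * \<gamma>) = 1 / \<rho>"
    by (simp add: \<rho>_def q_def algebra_simps)
  moreover have "blk_V b blk \<omega> \<omega>' x1 xstar + ((real b - 1) / real b) * \<gamma> * inner (F x1) (x1 - xstar)
      = lyap (x1, x1)"
    by (simp add: lyap_diag q_def)
  ultimately show ?thesis
    using expectation_V_sboe_le[OF x1, of k undefined] by (simp add: mult.assoc)
qed

end
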